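(* Let $\beta\in(0,1)$, $x^1\ge0$, $C:\mathbb{R}_+\to\mathbb{R}_+$ increasing, strictly convex and continuously differentiable with $c=C'$, $\lim_{x\to\infty}c(x)=\infty$. Let $\mathbb{P}$ be a probability distribution with nonnegative support, finite mean, and no atoms, and $\boldsymbol{p}^1,\boldsymbol{p}^2,\ldots$ i.i.d. with law $\mathbb{P}$. Fix samples $p_1,\ldots,p_N$ and define $y_{\mathrm{S}}$ and $y_{\mathrm{M}}$ as in the context. Then the out-of-sample value functions $\bar V_{\mathrm{S}}$ and $\bar V_{\mathrm{M}}$ are differentiable.
   Context: $c^{-1}$ is the inverse of $c$ on its range, $(z)_{[a,b]}$ the projection onto $[a,b]$, $(z)_+=\max\{z,0\}$, $\mu_N=\frac1N\sum_i p_i$. $y_{\mathrm{S}}(x,p)=c^{-1}((\beta\frac1N\sum_{i=1}^N(p_i-p)_+-(1-\beta)p)_{[c(0),c(x)]})$, $y_{\mathrm{M}}(x,p)=c^{-1}((\beta(\mu_N-p)_+-(1-\beta)p)_{[c(0),c(x)]})$. For a policy $y$, $\bar V_y(x)=\mathbb{E}_{\mathbb{P}^\infty}[\sum_{t=1}^\infty\beta^{t-1}(\boldsymbol{p}^t(x^t-x^{t+1})-C(x^{t+1}))]$ with $x^1=x$, $x^{t+1}=y(x^t,\boldsymbol{p}^t)$; $\bar V_{\mathrm{S}}=\bar V_{y_{\mathrm{S}}}$, $\bar V_{\mathrm{M}}=\bar V_{y_{\mathrm{M}}}$, as functions of $x\in[0,x^1]$. *)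

theory Defs
  imports "HOL-Probability.Probability"
begin

definition strictly_convex_on :: "real set \<Rightarrow> (real \<Rightarrow> real) \<Rightarrow> bool" where
  "strictly_convex_on S f \<longleftrightarrow>
     (\<forall>x\<in>S. \<forall>y\<in>S. \<forall>u::real. x \<noteq> y \<and> 0 < u \<and> u < 1 \<longrightarrow>
        f (u * x + (1 - u) * y) < u * f x + (1 - u) * f y)"

definition proj :: "real \<Rightarrow> real \<Rightarrow> real \<Rightarrow> real" where
  "proj a b z = max a (min b z)"

definition cinv :: "(real \<Rightarrow> real) \<Rightarrow> real \<Rightarrow> real" where
  "cinv c = inv_into {0..} c"

definition y_S :: "(real \<Rightarrow> real) \<Rightarrow> real \<Rightarrow> nat \<Rightarrow> (nat \<Rightarrow> real) \<Rightarrow> real \<Rightarrow> real \<Rightarrow> real" where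
  "y_S c \<beta> N ps x q =
     cinv c (proj (c 0) (c x)
       (\<beta> * ((1 / real N) * (\<Sum>i=1..N. max (ps i - q) 0)) - (1 - \<beta>) * q))"

definition mu_N :: "nat \<Rightarrow> (nat \<Rightarrow> real) \<Rightarrow> real" where
  "mu_N N ps = (1 / real N) * (\<Sum>i=1..N. ps i)"

definition y_M :: "(real \<Rightarrow> real) \<Rightarrow> real \<Rightarrow> nat \<Rightarrow> (nat \<Rightarrow> real) \<Rightarrow> real \<Rightarrow> real \<Rightarrow> real" where
  "y_M c \<beta> N ps x q =
     cinv c (proj (c 0) (c x) (\<beta> * max (mu_N N ps - q) 0 - (1 - \<beta>) * q))"

(* trajectory: traj y x \<omega> t = x^{t+1}, with \<omega> t = p^{t+1} *)
primrec traj :: "(real \<Rightarrow> real \<Rightarrow> real) \<Rightarrow> real \<Rightarrow> (nat \<Rightarrow> real) \<Rightarrow> nat \<Rightarrow> real" where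
  "traj y x \<omega> 0 = x"
| "traj y x \<omega> (Suc t) = y (traj y x \<omega> t) (\<omega> t)"

definition Vbar :: "(real \<Rightarrow> real) \<Rightarrow> real \<Rightarrow> real measure \<Rightarrow> (real \<Rightarrow> real \<Rightarrow> real) \<Rightarrow> real \<Rightarrow> real" where
  "Vbar C \<beta> P y x =
     integral\<^sup>L (Pi\<^sub>M UNIV (\<lambda>_::nat. P))
       (\<lambda>\<omega>. \<Sum>t. \<beta> ^ t * (\<omega> t * (traj y x \<omega> t - traj y x \<omega> (Suc t))
                              - C (traj y x \<omega> (Suc t))))"

end

(*
  Strict convexity of C makes c strictly increasing, so both policies have the form
  y x q = c^-1((h q)_[c 0, c x]) = min x (z q), with the target level z q = c^-1(max (c 0) (h q))
  and h strictly decreasing. The stock after t periods is the minimum of x and the first t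
  targets; as a function of x it is locally the identity or constant unless x equals one of
  these targets, which for x > 0 happens with probability zero because P has no atoms and h is
  injective. Hence each discounted stage reward is almost surely differentiable in x, and it is
  Lipschitz in x with constant beta^t (2 |p^t| + max |c|), which is integrable. Differentiating
  under the integral (dominated convergence) and then termwise (the derivative series is
  dominated by a geometric one) gives the differentiability of the value function.
*)

theory Submission
  imports Defs
begin

lemma convex_on_if_strictly_convex_on:
  assumes "strictly_convex_on S f" and "convex S"
  shows "convex_on S f"
proof (rule convex_onI)
  fix t x y :: real assume "0 < t" "t < 1" "x \<in> S" "y \<in> S"
  then show "f ((1 - t) *\<^sub>R x + t *\<^sub>R y) \<le> (1 - t) * f x + t * f y"
    using assms(1)[unfolded strictly_convex_on_def, rule_format, of x y "1 - t"]
    by (cases "x = y") (auto simp: algebra_simps)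
qed fact

lemma strict_mono_on_deriv_if_strictly_convex_on:
  assumes sconv: "strictly_convex_on {a..} f"
    and deriv: "\<And>x. a \<le> x \<Longrightarrow> (f has_real_derivative f' x) (at x within {a..})"
    and cont: "continuous_on {a..} f'"
  shows "strict_mono_on {a..} f'"
proof -
  have conv: "convex_on {a..} f"
    using convex_on_if_strictly_convex_on[OF sconv] by simp
  have on_interior: "f' u < f' v" if "a < u" "u < v" for u v
  proof -
    define m where "m = (u + v) / 2"
    have m: "u < m" "m < v" using that by (auto simp: m_def)
    have "f' u * (m - u) \<le> f m - f u" "f' v * (m - v) \<le> f m - f v"
      using that m deriv
      by (intro convex_on_imp_above_tangent[OF conv]; force)+
    moreover have "f m < (f u + f v) / 2"
      using sconv[unfolded strictly_convex_on_def, rule_format, of u v "1/2"] that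
      by (simp add: m_def field_simps)
    moreover have "m - v = - (m - u)" by (simp add: m_def field_simps)
    ultimately have "f' u * (m - u) < f' v * (m - u)" by (simp add: field_simps)
    then show ?thesis using m by simp
  qed
  have left_end: "f' a < f' v" if "a < v" for v
  proof -
    define m where "m = (a + v) / 2"
    have m: "a < m" "m < v" using that by (auto simp: m_def)
    have "(f' \<longlongrightarrow> f' a) (at a within {a..})"
      using cont by (simp add: continuous_on_def)
    then have "(f' \<longlongrightarrow> f' a) (at_right a)"
      by (rule filterlim_mono) (auto intro: at_le)
    then have "f' a \<le> f' m"
      by (rule tendsto_upperbound)
        (use m on_interior in \<open>auto simp: eventually_at_right_field intro!: exI[of _ m] less_imp_le\<close>)
    then show ?thesis using on_interior[OF m] by simp
  qed
  show ?thesis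
    by (rule strict_mono_onI) (metis atLeast_iff on_interior left_end order_le_less)
qed

definition target_level :: "(real \<Rightarrow> real) \<Rightarrow> real \<Rightarrow> real" where
  "target_level c v = cinv c (max (c 0) v)"

context
  fixes c :: "real \<Rightarrow> real"
  assumes c_strict_mono: "strict_mono_on {0..} c"
    and c_cont: "continuous_on {0..} c"
    and c_unbounded: "filterlim c at_top at_top"
begin

lemma image_atLeast_0_eq: "c ` {0..} = {c 0..}"
proof
  show "c ` {0..} \<subseteq> {c 0..}"
    using strict_mono_on_leD[OF c_strict_mono] by auto
  show "{c 0..} \<subseteq> c ` {0..}"
  proof
    fix v assume v: "v \<in> {c 0..}"
    obtain b where b: "0 \<le> b" "v \<le> c b"
      using c_unbounded[unfolded filterlim_at_top, rule_format, of v]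
      by (metis eventually_at_top_linorder max.cobounded1 max.cobounded2)
    have "continuous_on {0..b} c" using c_cont by (rule continuous_on_subset) auto
    then obtain u where "0 \<le> u" "u \<le> b" "c u = v" using IVT'[of c 0 v b] v b by auto
    then show "v \<in> c ` {0..}" by auto
  qed
qed

lemma cinv_nonneg: "c 0 \<le> v \<Longrightarrow> 0 \<le> cinv c v"
  using image_atLeast_0_eq unfolding cinv_def by (metis atLeast_iff inv_into_into)

lemma c_cinv: "c 0 \<le> v \<Longrightarrow> c (cinv c v) = v"
  using image_atLeast_0_eq unfolding cinv_def by (metis atLeast_iff f_inv_into_f)

lemma cinv_c: "0 \<le> u \<Longrightarrow> cinv c (c u) = u"
  unfolding cinv_def by (simp add: strict_mono_on_imp_inj_on[OF c_strict_mono])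

lemma strict_mono_on_cinv: "strict_mono_on {c 0..} (cinv c)"
proof (rule strict_mono_onI)
  fix v w assume "v \<in> {c 0..}" "w \<in> {c 0..}" "v < w"
  then show "cinv c v < cinv c w"
    using cinv_nonneg c_cinv strict_mono_on_less[OF c_strict_mono] by (metis atLeast_iff)
qed

lemma target_level_nonneg: "0 \<le> target_level c v"
  unfolding target_level_def by (simp add: cinv_nonneg)

lemma c_target_level: "c (target_level c v) = max (c 0) v"
  unfolding target_level_def by (simp add: c_cinv)

lemma mono_target_level: "mono (target_level c)"
  unfolding target_level_def
  by (rule monoI) (auto intro!: strict_mono_on_leD[OF strict_mono_on_cinv])

lemma cinv_proj_eq_min_target_level:
  assumes "0 \<le> x"
  shows "cinv c (proj (c 0) (c x) v) = min x (target_level c v)"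
proof -
  have "c 0 \<le> c x" using strict_mono_on_leD[OF c_strict_mono] assms by simp
  then have "proj (c 0) (c x) v = min (c x) (max (c 0) v)"
    unfolding proj_def by linarith
  also have "cinv c \<dots> = min (cinv c (c x)) (cinv c (max (c 0) v))"
    using \<open>c 0 \<le> c x\<close> by (simp add: min_def strict_mono_on_less_eq[OF strict_mono_on_cinv])
  finally show ?thesis using cinv_c[OF assms] by (simp add: target_level_def)
qed

lemma target_level_eq_pos_imp:
  assumes "0 < u" and "target_level c v = u"
  shows "v = c u"
proof -
  have "c 0 < c u" using strict_mono_onD[OF c_strict_mono] \<open>0 < u\<close> by simp
  moreover have "c u = max (c 0) v" using c_target_level[of v] assms(2) by simp
  ultimately show ?thesis by (simp add: max_def split: if_splits)
qed

end

lemma AE_neq_if_inj_atomless: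
  fixes P :: "'a::t1_space measure"
  assumes "finite_measure P" and "sets P = sets borel" and "\<forall>q. measure P {q} = 0"
    and "inj h"
  shows "AE q in P. h q \<noteq> v"
proof (cases "v \<in> range h")
  case True
  then obtain q0 where "h q0 = v" by blast
  have "{q0} \<in> null_sets P"
    using assms(1-3) by (auto simp: null_sets_def finite_measure.emeasure_eq_measure intro: borel_closed)
  moreover have "{q \<in> space P. \<not> h q \<noteq> v} \<subseteq> {q0}"
    using \<open>h q0 = v\<close> \<open>inj h\<close> by (auto dest: injD)
  ultimately show ?thesis by (rule AE_I')
qed auto

lemma borel_measurable_continuous_on_comp:
  assumes "continuous_on A f" and "g \<in> borel_measurable M" and "\<And>x. x \<in> space M \<Longrightarrow> g x \<in> A"
  shows "(\<lambda>x. f (g x)) \<in> borel_measurable M"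
  using measurable_compose[OF measurable_restrict_space2[OF _ assms(2)]
      borel_measurable_continuous_on_restrict[OF assms(1)]] assms(3)
  by auto

lemma AE_summable_norm_if_summable_integral_norm:
  fixes f :: "nat \<Rightarrow> 'a \<Rightarrow> 'b::{banach, second_countable_topology}"
  assumes integrable: "\<And>i. integrable M (f i)"
    and summable: "summable (\<lambda>i. \<integral>x. norm (f i x) \<partial>M)"
  shows "AE x in M. summable (\<lambda>i. norm (f i x))"
proof -
  have "(\<integral>\<^sup>+x. (\<Sum>i. ennreal (norm (f i x))) \<partial>M) = (\<Sum>i. \<integral>\<^sup>+x. norm (f i x) \<partial>M)"
    using integrable by (intro nn_integral_suminf) auto
  also have "\<dots> = (\<Sum>i. ennreal (\<integral>x. norm (f i x) \<partial>M))"
    using integrable by (intro suminf_cong nn_integral_eq_integral integrable_norm) auto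
  also have "\<dots> = ennreal (\<Sum>i. \<integral>x. norm (f i x) \<partial>M)"
    using summable by (intro suminf_ennreal2) auto
  finally have "(\<integral>\<^sup>+x. (\<Sum>i. ennreal (norm (f i x))) \<partial>M) \<noteq> \<infinity>" by simp
  then have "AE x in M. (\<Sum>i. ennreal (norm (f i x))) \<noteq> \<infinity>"
    using integrable by (intro nn_integral_PInf_AE) auto
  then show ?thesis
    by eventually_elim (auto intro: summable_suminf_not_top)
qed

lemma has_field_derivative_if_ident_const:
  "((\<lambda>a. if b then a else k) has_field_derivative of_bool b) F" for k :: real
  by (cases b) auto

lemma has_field_derivative_integral_dominated:
  fixes f :: "real \<Rightarrow> 'a \<Rightarrow> real"
  assumes "x \<in> S"
    and integrable: "\<And>a. a \<in> S \<Longrightarrow> integrable M (f a)"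
    and "integrable M L"
    and "f' \<in> borel_measurable M"
    and deriv: "AE \<omega> in M. ((\<lambda>a. f a \<omega>) has_field_derivative f' \<omega>) (at x within S)"
    and Lipschitz: "AE \<omega> in M. \<forall>a\<in>S. \<bar>f a \<omega> - f x \<omega>\<bar> \<le> L \<omega> * \<bar>a - x\<bar>"
  shows "((\<lambda>a. integral\<^sup>L M (f a)) has_field_derivative integral\<^sup>L M f') (at x within S)"
  unfolding has_field_derivative_iff tendsto_at_iff_sequentially comp_def
proof (intro allI impI)
  fix X assume X: "\<forall>i. X i \<in> S - {x}" "X \<longlonglongrightarrow> x"
  have quotient: "(integral\<^sup>L M (f (X i)) - integral\<^sup>L M (f x)) / (X i - x)
      = (\<integral>\<omega>. (f (X i) \<omega> - f x \<omega>) / (X i - x) \<partial>M)" for i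
    using integrable X \<open>x \<in> S\<close> by simp
  show "(\<lambda>i. (integral\<^sup>L M (f (X i)) - integral\<^sup>L M (f x)) / (X i - x)) \<longlonglongrightarrow> integral\<^sup>L M f'"
    unfolding quotient
  proof (rule integral_dominated_convergence[where w=L])
    show "(\<lambda>\<omega>. (f (X i) \<omega> - f x \<omega>) / (X i - x)) \<in> borel_measurable M" for i
      using integrable X \<open>x \<in> S\<close> by (intro borel_measurable_divide borel_measurable_diff borel_measurable_integrable) auto
    show "AE \<omega> in M. (\<lambda>i. (f (X i) \<omega> - f x \<omega>) / (X i - x)) \<longlonglongrightarrow> f' \<omega>"
      using deriv by eventually_elim
        (use X in \<open>auto simp: has_field_derivative_iff tendsto_at_iff_sequentially comp_def\<close>)
    show "AE \<omega> in M. norm ((f (X i) \<omega> - f x \<omega>) / (X i - x)) \<le> L \<omega>" for i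
      using Lipschitz by eventually_elim (use X in \<open>auto simp: divide_le_eq\<close>)
  qed fact+
qed

locale base_stock_model =
  fixes P :: "real measure" and z C c :: "real \<Rightarrow> real" and \<beta> xbar :: real
  assumes prob_space_P: "prob_space P"
    and sets_P: "sets P = sets borel"
    and integrable_P: "integrable P (\<lambda>q. q)"
    and z_measurable: "z \<in> borel_measurable borel"
    and z_nonneg: "\<And>q. 0 \<le> z q"
    and z_no_positive_atom: "\<And>u. 0 < u \<Longrightarrow> AE q in P. z q \<noteq> u"
    and beta: "0 \<le> \<beta>" "\<beta> < 1"
    and C_deriv: "\<And>x. 0 \<le> x \<Longrightarrow> (C has_real_derivative c x) (at x within {0..})"
    and c_cont: "continuous_on {0..} c"
    and xbar_nonneg: "0 \<le> xbar"
begin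

abbreviation \<Omega> :: "(nat \<Rightarrow> real) measure" where
  "\<Omega> \<equiv> Pi\<^sub>M UNIV (\<lambda>_. P)"

sublocale paths: prob_space \<Omega>
  using prob_space_P by (rule prob_space_PiM)

lemma measurable_component[measurable]: "(\<lambda>\<omega>. \<omega> t) \<in> borel_measurable \<Omega>"
  using measurable_component_singleton[of t UNIV "\<lambda>_. P"] measurable_cong_sets[OF refl sets_P]
  by blast

declare z_measurable[measurable]

abbreviation stock :: "nat \<Rightarrow> real \<Rightarrow> (nat \<Rightarrow> real) \<Rightarrow> real" where
  "stock t x \<omega> \<equiv> traj (\<lambda>x q. min x (z q)) x \<omega> t"

definition below_targets :: "nat \<Rightarrow> real \<Rightarrow> (nat \<Rightarrow> real) \<Rightarrow> bool" where
  "below_targets t x \<omega> \<longleftrightarrow> (\<forall>s<t. x < z (\<omega> s))"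

lemma stock_measurable[measurable]: "(\<lambda>\<omega>. stock t x \<omega>) \<in> borel_measurable \<Omega>"
  by (induction t) auto

lemma stock_bounds: "0 \<le> x \<Longrightarrow> 0 \<le> stock t x \<omega> \<and> stock t x \<omega> \<le> x"
  by (induction t) (auto simp: z_nonneg min_def)

lemma stock_0: "stock t 0 \<omega> = 0"
  by (induction t) (auto simp: z_nonneg)

lemma stock_Lipschitz: "\<bar>stock t a \<omega> - stock t b \<omega>\<bar> \<le> \<bar>a - b\<bar>"
  by (induction t) (auto simp: min_def)

lemma stock_eq_if_below_targets: "below_targets t x \<omega> \<Longrightarrow> stock t x \<omega> = x"
  unfolding below_targets_def by (induction t) (auto simp: min_def)

(* A tie at x = 0 is harmless: on {0..} the stock is then constantly 0 near x. *)
lemma eventually_stock_eq: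
  assumes "0 \<le> x" and "x = 0 \<or> (\<forall>s<t. z (\<omega> s) \<noteq> x)"
  shows "\<forall>\<^sub>F a in at x within {0..}. stock t a \<omega> = (if below_targets t x \<omega> then a else stock t x \<omega>)"
  using assms(2)
proof (induction t)
  case (Suc t)
  have "x = 0 \<or> (\<forall>s<t. z (\<omega> s) \<noteq> x)" using Suc.prems by (auto simp: less_Suc_eq)
  note IH = Suc.IH[OF this]
  have below_Suc: "below_targets (Suc t) x \<omega> \<longleftrightarrow> below_targets t x \<omega> \<and> x < z (\<omega> t)"
    by (auto simp: below_targets_def less_Suc_eq)
  show ?case
  proof (cases x "z (\<omega> t)" rule: linorder_cases)
    case less
    from IH order_tendstoD(2)[OF tendsto_ident_at less] show ?thesis
      by eventually_elim (use less in \<open>auto simp: below_Suc split: split_min\<close>)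
  next
    case greater
    from IH order_tendstoD(1)[OF tendsto_ident_at greater] show ?thesis
      by eventually_elim (use greater in \<open>auto simp: below_Suc stock_eq_if_below_targets split: split_min\<close>)
  next
    case equal
    then have "x = 0" using Suc.prems by auto
    have "\<forall>\<^sub>F a in at x within {0..}. 0 \<le> a"
      by (simp add: eventually_at_filter)
    then show ?thesis
      by eventually_elim (use equal \<open>x = 0\<close> in \<open>auto simp: below_Suc below_targets_def stock_0 stock_bounds min_absorb2\<close>)
  qed
qed (simp add: below_targets_def)

lemma C_has_derivative_within: "x \<in> {0..xbar} \<Longrightarrow> (C has_field_derivative c x) (at x within {0..xbar})"
  by (rule DERIV_subset[OF C_deriv]) auto

definition stage_reward :: "nat \<Rightarrow> real \<Rightarrow> (nat \<Rightarrow> real) \<Rightarrow> real" where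
  "stage_reward t x \<omega> = \<beta> ^ t * (\<omega> t * (stock t x \<omega> - stock (Suc t) x \<omega>) - C (stock (Suc t) x \<omega>))"

definition stage_reward_deriv :: "nat \<Rightarrow> real \<Rightarrow> (nat \<Rightarrow> real) \<Rightarrow> real" where
  "stage_reward_deriv t x \<omega> = \<beta> ^ t *
     (\<omega> t * (of_bool (below_targets t x \<omega>) - of_bool (below_targets (Suc t) x \<omega>))
      - c (stock (Suc t) x \<omega>) * of_bool (below_targets (Suc t) x \<omega>))"

lemma stage_reward_has_derivative:
  assumes x: "x \<in> {0..xbar}" and no_tie: "x = 0 \<or> (\<forall>s<Suc t. z (\<omega> s) \<noteq> x)"
  shows "((\<lambda>a. stage_reward t a \<omega>) has_field_derivative stage_reward_deriv t x \<omega>) (at x within {0..xbar})"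
proof -
  define A where "A a = (if below_targets t x \<omega> then a else stock t x \<omega>)" for a
  define B where "B a = (if below_targets (Suc t) x \<omega> then a else stock (Suc t) x \<omega>)" for a
  have "{0..xbar} \<subseteq> {0..}" by auto
  note within = filter_leD[OF at_le[OF this]]
  have "\<forall>\<^sub>F a in at x within {0..xbar}. stock t a \<omega> = A a"
    unfolding A_def using x no_tie by (intro within eventually_stock_eq) (auto simp: less_Suc_eq)
  moreover have "\<forall>\<^sub>F a in at x within {0..xbar}. stock (Suc t) a \<omega> = B a"
    unfolding B_def using x no_tie by (intro within eventually_stock_eq) auto
  ultimately have eventually_eq: "\<forall>\<^sub>F a in at x within {0..xbar}.
      stage_reward t a \<omega> = \<beta> ^ t * (\<omega> t * (A a - B a) - C (B a))"
    by eventually_elim (simp add: stage_reward_def)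
  have A_eq: "A x = stock t x \<omega>" and B_eq: "B x = stock (Suc t) x \<omega>"
    using stock_eq_if_below_targets[of t x \<omega>] stock_eq_if_below_targets[of "Suc t" x \<omega>]
    by (auto simp: A_def B_def)
  have dA: "(A has_field_derivative of_bool (below_targets t x \<omega>)) (at x within {0..xbar})"
    unfolding A_def by (rule has_field_derivative_if_ident_const)
  have dB: "(B has_field_derivative of_bool (below_targets (Suc t) x \<omega>)) (at x within {0..xbar})"
    unfolding B_def by (rule has_field_derivative_if_ident_const)
  have dCB: "((\<lambda>a. C (B a)) has_field_derivative
      c (stock (Suc t) x \<omega>) * of_bool (below_targets (Suc t) x \<omega>)) (at x within {0..xbar})"
  proof (cases "below_targets (Suc t) x \<omega>")
    case True
    then have "stock (Suc t) x \<omega> = x" by (rule stock_eq_if_below_targets)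
    moreover have "(C has_field_derivative c x) (at x within {0..xbar})"
      using x by (rule C_has_derivative_within)
    ultimately show ?thesis using True by (simp add: B_def)
  next
    case False
    then show ?thesis by (simp add: B_def)
  qed
  have "((\<lambda>a. \<beta> ^ t * (\<omega> t * (A a - B a) - C (B a))) has_field_derivative stage_reward_deriv t x \<omega>)
      (at x within {0..xbar})"
    unfolding stage_reward_deriv_def by (intro DERIV_cmult DERIV_diff dA dB dCB)
  then show ?thesis
    using eventually_eq by (subst has_field_derivative_cong_eventually) (auto simp: stage_reward_def A_eq B_eq)
qed

definition c_bound :: real where
  "c_bound = (SUP v\<in>{0..xbar}. \<bar>c v\<bar>)"

lemma abs_c_le_c_bound: "v \<in> {0..xbar} \<Longrightarrow> \<bar>c v\<bar> \<le> c_bound"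
proof -
  have "bounded ((\<lambda>v. \<bar>c v\<bar>) ` {0..xbar})"
    by (intro compact_imp_bounded compact_continuous_image continuous_on_rabs
        continuous_on_subset[OF c_cont]) auto
  then show "v \<in> {0..xbar} \<Longrightarrow> \<bar>c v\<bar> \<le> c_bound"
    unfolding c_bound_def by (intro cSUP_upper bounded_imp_bdd_above)
qed

lemma c_bound_nonneg: "0 \<le> c_bound"
  using abs_c_le_c_bound[of 0] xbar_nonneg by simp

lemma C_Lipschitz: "u \<in> {0..xbar} \<Longrightarrow> v \<in> {0..xbar} \<Longrightarrow> \<bar>C u - C v\<bar> \<le> c_bound * \<bar>u - v\<bar>"
  using field_differentiable_bound[of "{0..xbar}" C c c_bound u v] C_has_derivative_within abs_c_le_c_bound
  by auto

lemma stage_reward_Lipschitz: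
  assumes "a \<in> {0..xbar}" and "b \<in> {0..xbar}"
  shows "\<bar>stage_reward t a \<omega> - stage_reward t b \<omega>\<bar> \<le> \<beta> ^ t * (\<bar>\<omega> t\<bar> * 2 + c_bound) * \<bar>a - b\<bar>"
proof -
  define Ta Tb Sa Sb where stocks: "Ta = stock t a \<omega>" "Tb = stock t b \<omega>"
    "Sa = stock (Suc t) a \<omega>" "Sb = stock (Suc t) b \<omega>"
  have "\<bar>Ta - Tb\<bar> \<le> \<bar>a - b\<bar>" and Lipschitz_S: "\<bar>Sa - Sb\<bar> \<le> \<bar>a - b\<bar>"
    unfolding stocks by (rule stock_Lipschitz)+
  then have "\<bar>(Ta - Sa) - (Tb - Sb)\<bar> \<le> 2 * \<bar>a - b\<bar>" by (simp add: abs_le_iff)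
  then have reward_part: "\<bar>\<omega> t * ((Ta - Sa) - (Tb - Sb))\<bar> \<le> \<bar>\<omega> t\<bar> * (2 * \<bar>a - b\<bar>)"
    unfolding abs_mult by (rule mult_left_mono) simp
  have "Sa \<in> {0..xbar}" "Sb \<in> {0..xbar}"
    using stock_bounds[of a \<omega> "Suc t"] stock_bounds[of b \<omega> "Suc t"] assms
    unfolding stocks by (auto simp del: traj.simps)
  then have "\<bar>C Sa - C Sb\<bar> \<le> c_bound * \<bar>Sa - Sb\<bar>" by (rule C_Lipschitz)
  also have "\<dots> \<le> c_bound * \<bar>a - b\<bar>" using Lipschitz_S c_bound_nonneg by (rule mult_left_mono)
  finally have cost_part: "\<bar>C Sa - C Sb\<bar> \<le> c_bound * \<bar>a - b\<bar>" .
  have "\<bar>\<omega> t * ((Ta - Sa) - (Tb - Sb)) - (C Sa - C Sb)\<bar>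
      \<le> \<bar>\<omega> t * ((Ta - Sa) - (Tb - Sb))\<bar> + \<bar>C Sa - C Sb\<bar>"
    by (rule abs_triangle_ineq4)
  also have "\<dots> \<le> (\<bar>\<omega> t\<bar> * 2 + c_bound) * \<bar>a - b\<bar>"
    using reward_part cost_part by (simp add: algebra_simps)
  finally have "\<beta> ^ t * \<bar>\<omega> t * ((Ta - Sa) - (Tb - Sb)) - (C Sa - C Sb)\<bar>
      \<le> \<beta> ^ t * ((\<bar>\<omega> t\<bar> * 2 + c_bound) * \<bar>a - b\<bar>)"
    using beta by (simp add: mult_left_mono)
  moreover have "stage_reward t a \<omega> - stage_reward t b \<omega>
      = \<beta> ^ t * (\<omega> t * ((Ta - Sa) - (Tb - Sb)) - (C Sa - C Sb))"
    unfolding stage_reward_def stocks by (simp add: algebra_simps del: traj.simps)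
  ultimately show ?thesis
    using beta by (simp add: abs_mult mult.assoc)
qed

lemma abs_stage_reward_le:
  assumes "a \<in> {0..xbar}"
  shows "\<bar>stage_reward t a \<omega>\<bar> \<le> \<beta> ^ t * (\<bar>\<omega> t\<bar> * (2 * xbar) + (\<bar>C 0\<bar> + c_bound * xbar))"
proof -
  have "\<bar>stage_reward t 0 \<omega>\<bar> = \<beta> ^ t * \<bar>C 0\<bar>"
    using stock_0[of \<omega> t] stock_0[of \<omega> "Suc t"] beta by (simp add: stage_reward_def abs_mult del: traj.simps)
  moreover have "\<bar>stage_reward t a \<omega> - stage_reward t 0 \<omega>\<bar> \<le> \<beta> ^ t * (\<bar>\<omega> t\<bar> * 2 + c_bound) * xbar"
    using stage_reward_Lipschitz[of a 0 t \<omega>] assms xbar_nonneg beta c_bound_nonneg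
    by (force intro: order_trans mult_left_mono)
  ultimately show ?thesis
    by (simp add: algebra_simps)
qed

lemma abs_stage_reward_deriv_le:
  assumes "x \<in> {0..xbar}"
  shows "\<bar>stage_reward_deriv t x \<omega>\<bar> \<le> \<beta> ^ t * (\<bar>\<omega> t\<bar> * 1 + c_bound)"
proof -
  have "\<bar>c (stock (Suc t) x \<omega>)\<bar> \<le> c_bound"
    using stock_bounds[of x \<omega> "Suc t"] assms by (intro abs_c_le_c_bound) (auto simp del: traj.simps)
  then have "\<bar>\<omega> t * (of_bool (below_targets t x \<omega>) - of_bool (below_targets (Suc t) x \<omega>))
      - c (stock (Suc t) x \<omega>) * of_bool (below_targets (Suc t) x \<omega>)\<bar> \<le> \<bar>\<omega> t\<bar> + c_bound"
    by (auto simp: abs_mult simp del: traj.simps)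
  then show ?thesis
    using beta by (simp add: stage_reward_deriv_def abs_mult mult_left_mono del: traj.simps)
qed

lemma C_cont: "continuous_on {0..} C"
  by (rule DERIV_continuous_on) (use C_deriv in auto)

lemma stage_reward_measurable[measurable]:
  assumes "0 \<le> x"
  shows "(\<lambda>\<omega>. stage_reward t x \<omega>) \<in> borel_measurable \<Omega>"
proof -
  have [measurable]: "(\<lambda>\<omega>. C (stock (Suc t) x \<omega>)) \<in> borel_measurable \<Omega>"
    using stock_bounds[OF assms] by (intro borel_measurable_continuous_on_comp[OF C_cont]) (auto simp: z_nonneg)
  show ?thesis unfolding stage_reward_def by measurable
qed

lemma stage_reward_deriv_measurable[measurable]:
  assumes "0 \<le> x"
  shows "(\<lambda>\<omega>. stage_reward_deriv t x \<omega>) \<in> borel_measurable \<Omega>"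
proof -
  have [measurable]: "(\<lambda>\<omega>. c (stock (Suc t) x \<omega>)) \<in> borel_measurable \<Omega>"
    using stock_bounds[OF assms] by (intro borel_measurable_continuous_on_comp[OF c_cont]) (auto simp: z_nonneg)
  show ?thesis unfolding stage_reward_deriv_def below_targets_def by measurable
qed

definition mean_abs :: real where
  "mean_abs = (\<integral>q. \<bar>q\<bar> \<partial>P)"

lemma integrable_abs_component: "integrable \<Omega> (\<lambda>\<omega>. \<bar>\<omega> t\<bar>)"
  and integral_abs_component: "(\<integral>\<omega>. \<bar>\<omega> t\<bar> \<partial>\<Omega>) = mean_abs"
proof -
  have component: "(\<lambda>\<omega>. \<omega> t) \<in> measurable \<Omega> P"
    by (rule measurable_component_singleton) simp
  have distr: "distr \<Omega> P (\<lambda>\<omega>. \<omega> t) = P"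
    using distr_PiM_component[of UNIV "\<lambda>_. P" t] prob_space_P by simp
  have [measurable]: "(\<lambda>q::real. \<bar>q\<bar>) \<in> borel_measurable P"
    unfolding measurable_cong_sets[OF sets_P refl] by simp
  have "integrable P (\<lambda>q. \<bar>q\<bar>)" using integrable_P by (rule integrable_abs)
  then show "integrable \<Omega> (\<lambda>\<omega>. \<bar>\<omega> t\<bar>)"
    using integrable_distr_eq[OF component, of "\<lambda>q. \<bar>q\<bar>"] distr by simp
  show "(\<integral>\<omega>. \<bar>\<omega> t\<bar> \<partial>\<Omega>) = mean_abs"
    using integral_distr[OF component, of "\<lambda>q. \<bar>q\<bar>"] distr by (simp add: mean_abs_def)
qed

lemma integrable_discounted_bound: "integrable \<Omega> (\<lambda>\<omega>. \<beta> ^ t * (\<bar>\<omega> t\<bar> * k1 + k2))"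
  using integrable_abs_component by auto

lemma integral_discounted_bound: "(\<integral>\<omega>. \<beta> ^ t * (\<bar>\<omega> t\<bar> * k1 + k2) \<partial>\<Omega>) = \<beta> ^ t * (mean_abs * k1 + k2)"
  using integrable_abs_component integral_abs_component by (simp add: paths.prob_space)

lemma integrable_stage_reward:
  assumes "a \<in> {0..xbar}"
  shows "integrable \<Omega> (stage_reward t a)"
proof (rule Bochner_Integration.integrable_bound)
  show "integrable \<Omega> (\<lambda>\<omega>. \<beta> ^ t * (\<bar>\<omega> t\<bar> * (2 * xbar) + (\<bar>C 0\<bar> + c_bound * xbar)))"
    by (rule integrable_discounted_bound)
  show "AE \<omega> in \<Omega>. norm (stage_reward t a \<omega>)
      \<le> norm (\<beta> ^ t * (\<bar>\<omega> t\<bar> * (2 * xbar) + (\<bar>C 0\<bar> + c_bound * xbar)))"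
    using abs_stage_reward_le[OF assms] by (auto intro: order_trans[OF _ abs_ge_self])
  show "stage_reward t a \<in> borel_measurable \<Omega>"
    using assms by (intro stage_reward_measurable) simp
qed

lemma integrable_stage_reward_deriv:
  assumes "x \<in> {0..xbar}"
  shows "integrable \<Omega> (stage_reward_deriv t x)"
proof (rule Bochner_Integration.integrable_bound)
  show "integrable \<Omega> (\<lambda>\<omega>. \<beta> ^ t * (\<bar>\<omega> t\<bar> * 1 + c_bound))"
    by (rule integrable_discounted_bound)
  show "AE \<omega> in \<Omega>. norm (stage_reward_deriv t x \<omega>) \<le> norm (\<beta> ^ t * (\<bar>\<omega> t\<bar> * 1 + c_bound))"
    using abs_stage_reward_deriv_le[OF assms] by (auto intro: order_trans[OF _ abs_ge_self])
  show "stage_reward_deriv t x \<in> borel_measurable \<Omega>"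
    using assms by (intro stage_reward_deriv_measurable) simp
qed

lemma AE_targets_neq:
  assumes "0 \<le> x"
  shows "AE \<omega> in \<Omega>. x = 0 \<or> (\<forall>s<n. z (\<omega> s) \<noteq> x)"
proof (cases "x = 0")
  case False
  then have "AE \<omega> in \<Omega>. \<forall>s\<in>{..<n}. z (\<omega> s) \<noteq> x"
    using assms prob_space_P
    by (intro eventually_ball_finite ballI AE_PiM_component z_no_positive_atom) auto
  then show ?thesis by eventually_elim auto
qed simp

lemma expected_stage_reward_has_derivative:
  assumes x: "x \<in> {0..xbar}"
  shows "((\<lambda>a. \<integral>\<omega>. stage_reward t a \<omega> \<partial>\<Omega>) has_field_derivative (\<integral>\<omega>. stage_reward_deriv t x \<omega> \<partial>\<Omega>))
    (at x within {0..xbar})"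
proof (rule has_field_derivative_integral_dominated)
  show "integrable \<Omega> (\<lambda>\<omega>. \<beta> ^ t * (\<bar>\<omega> t\<bar> * 2 + c_bound))"
    by (rule integrable_discounted_bound)
  show "AE \<omega> in \<Omega>. ((\<lambda>a. stage_reward t a \<omega>) has_field_derivative stage_reward_deriv t x \<omega>)
      (at x within {0..xbar})"
  proof -
    have "AE \<omega> in \<Omega>. x = 0 \<or> (\<forall>s<Suc t. z (\<omega> s) \<noteq> x)"
      using x by (intro AE_targets_neq) simp
    then show ?thesis by eventually_elim (rule stage_reward_has_derivative[OF x])
  qed
  show "AE \<omega> in \<Omega>. \<forall>a\<in>{0..xbar}.
      \<bar>stage_reward t a \<omega> - stage_reward t x \<omega>\<bar> \<le> \<beta> ^ t * (\<bar>\<omega> t\<bar> * 2 + c_bound) * \<bar>a - x\<bar>"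
    using stage_reward_Lipschitz x by simp
qed (use x integrable_stage_reward in auto)

lemma abs_expected_stage_reward_deriv_le:
  assumes "x \<in> {0..xbar}"
  shows "\<bar>\<integral>\<omega>. stage_reward_deriv t x \<omega> \<partial>\<Omega>\<bar> \<le> \<beta> ^ t * (mean_abs + c_bound)"
proof -
  have "\<bar>\<integral>\<omega>. stage_reward_deriv t x \<omega> \<partial>\<Omega>\<bar> \<le> (\<integral>\<omega>. \<bar>stage_reward_deriv t x \<omega>\<bar> \<partial>\<Omega>)"
    using integral_norm_bound[of \<Omega> "stage_reward_deriv t x"] by simp
  also have "\<dots> \<le> (\<integral>\<omega>. \<beta> ^ t * (\<bar>\<omega> t\<bar> * 1 + c_bound) \<partial>\<Omega>)"
    using assms integrable_stage_reward_deriv abs_stage_reward_deriv_le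
    by (intro integral_mono integrable_discounted_bound) auto
  also have "\<dots> = \<beta> ^ t * (mean_abs * 1 + c_bound)"
    by (rule integral_discounted_bound)
  finally show ?thesis by simp
qed

lemma stage_rewards_sums_Vbar:
  assumes "x \<in> {0..xbar}"
  shows "(\<lambda>t. \<integral>\<omega>. stage_reward t x \<omega> \<partial>\<Omega>) sums Vbar C \<beta> P (\<lambda>x q. min x (z q)) x"
proof -
  define K where "K = mean_abs * (2 * xbar) + (\<bar>C 0\<bar> + c_bound * xbar)"
  have integrable: "integrable \<Omega> (stage_reward t x)" for t
    using assms by (rule integrable_stage_reward)
  have "norm (\<integral>\<omega>. norm (stage_reward t x \<omega>) \<partial>\<Omega>) \<le> \<beta> ^ t * K" for t
  proof -
    have "norm (\<integral>\<omega>. norm (stage_reward t x \<omega>) \<partial>\<Omega>) = (\<integral>\<omega>. \<bar>stage_reward t x \<omega>\<bar> \<partial>\<Omega>)"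
      by simp
    also have "\<dots> \<le> (\<integral>\<omega>. \<beta> ^ t * (\<bar>\<omega> t\<bar> * (2 * xbar) + (\<bar>C 0\<bar> + c_bound * xbar)) \<partial>\<Omega>)"
      using assms integrable abs_stage_reward_le by (intro integral_mono integrable_discounted_bound) auto
    also have "\<dots> = \<beta> ^ t * K"
      unfolding K_def by (rule integral_discounted_bound)
    finally show ?thesis .
  qed
  moreover have "summable (\<lambda>t. \<beta> ^ t * K)"
    using beta by (intro summable_mult2 summable_geometric) simp
  ultimately have "summable (\<lambda>t. \<integral>\<omega>. norm (stage_reward t x \<omega>) \<partial>\<Omega>)"
    by (rule summable_comparison_test'[where N=0, rotated])
  then have "(\<lambda>t. \<integral>\<omega>. stage_reward t x \<omega> \<partial>\<Omega>) sums (\<integral>\<omega>. (\<Sum>t. stage_reward t x \<omega>) \<partial>\<Omega>)"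
    using integrable by (intro sums_integral AE_summable_norm_if_summable_integral_norm)
  then show ?thesis by (simp add: Vbar_def stage_reward_def)
qed

lemma traj_eq_stock:
  assumes "\<And>x q. 0 \<le> x \<Longrightarrow> y x q = min x (z q)" and "0 \<le> x"
  shows "traj y x \<omega> t = stock t x \<omega>"
  by (induction t) (use assms stock_bounds in auto)

theorem differentiable_Vbar:
  assumes y: "\<And>x q. 0 \<le> x \<Longrightarrow> y x q = min x (z q)" and x: "x \<in> {0..xbar}"
  shows "Vbar C \<beta> P y differentiable (at x within {0..xbar})"
proof -
  define g where "g t a = (\<integral>\<omega>. stage_reward t a \<omega> \<partial>\<Omega>)" for t a
  define g' where "g' t a = (\<integral>\<omega>. stage_reward_deriv t a \<omega> \<partial>\<Omega>)" for t a
  have "uniform_limit {0..xbar} (\<lambda>n a. \<Sum>t<n. g' t a) (\<lambda>a. \<Sum>t. g' t a) sequentially"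
  proof (rule Weierstrass_m_test)
    show "\<And>t a. a \<in> {0..xbar} \<Longrightarrow> norm (g' t a) \<le> \<beta> ^ t * (mean_abs + c_bound)"
      unfolding g'_def using abs_expected_stage_reward_deriv_le by simp
    show "summable (\<lambda>t. \<beta> ^ t * (mean_abs + c_bound))"
      using beta by (intro summable_mult2 summable_geometric) simp
  qed
  moreover have "summable (\<lambda>t. g t x)"
    unfolding g_def using stage_rewards_sums_Vbar[OF x] by (rule sums_summable)
  ultimately have "\<exists>G. \<forall>a\<in>{0..xbar}. (\<lambda>t. g t a) sums G a \<and>
      (G has_field_derivative (\<Sum>t. g' t a)) (at a within {0..xbar})"
  proof (rule has_field_derivative_series[rotated 2, OF _ x])
    show "convex {0..xbar}" by simp
    show "(g t has_field_derivative g' t a) (at a within {0..xbar})" if "a \<in> {0..xbar}" for t a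
      unfolding g_def g'_def using that by (rule expected_stage_reward_has_derivative)
  qed
  then obtain G where sums_G: "\<And>a. a \<in> {0..xbar} \<Longrightarrow> (\<lambda>t. g t a) sums G a"
    and G_deriv: "(G has_field_derivative (\<Sum>t. g' t x)) (at x within {0..xbar})"
    using x by blast
  have G_eq: "G a = Vbar C \<beta> P y a" if "a \<in> {0..xbar}" for a
  proof -
    have "0 \<le> a" using that by simp
    have "Vbar C \<beta> P y a = Vbar C \<beta> P (\<lambda>x q. min x (z q)) a"
      using traj_eq_stock[OF y \<open>0 \<le> a\<close>] by (simp only: Vbar_def)
    then show ?thesis
      using sums_unique2[OF sums_G[OF that] stage_rewards_sums_Vbar[OF that, folded g_def]] by simp
  qed
  have "(Vbar C \<beta> P y has_field_derivative (\<Sum>t. g' t x)) (at x within {0..xbar})"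
    using G_deriv zero_less_one x by (rule has_field_derivative_transform_within) (simp add: G_eq)
  then show ?thesis
    by (rule differentiableI[OF has_field_derivative_imp_has_derivative])
qed

end

lemma inj_weighted_antimono_minus_linear:
  fixes \<phi> :: "real \<Rightarrow> real"
  assumes "antimono \<phi>" and "0 \<le> \<beta>" and "\<beta> < 1"
  shows "inj (\<lambda>q. \<beta> * \<phi> q - (1 - \<beta>) * q)"
proof (rule linorder_injI)
  fix a b :: real assume "a < b"
  then have "\<phi> b \<le> \<phi> a" using antimonoD[OF assms(1)] by simp
  then have "\<beta> * \<phi> b \<le> \<beta> * \<phi> a" using assms(2) by (rule mult_left_mono)
  moreover have "(1 - \<beta>) * a < (1 - \<beta>) * b" using \<open>a < b\<close> assms(3) by simp
  ultimately show "\<beta> * \<phi> a - (1 - \<beta>) * a \<noteq> \<beta> * \<phi> b - (1 - \<beta>) * b" by linarith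
qed

lemma differentiable_Vbar_cinv_proj:
  fixes C c h :: "real \<Rightarrow> real" and P :: "real measure" and \<beta> xbar :: real
  assumes beta: "0 \<le> \<beta>" "\<beta> < 1" and xbar: "0 \<le> xbar"
    and C_deriv: "\<forall>x\<ge>0. (C has_real_derivative c x) (at x within {0..})"
    and c_strict_mono: "strict_mono_on {0..} c"
    and c_cont: "continuous_on {0..} c"
    and c_lim: "filterlim c at_top at_top"
    and P_prob: "prob_space P" and P_borel: "sets P = sets borel"
    and P_mean: "integrable P (\<lambda>q. q)" and P_noatom: "\<forall>q. measure P {q} = 0"
    and h_measurable: "h \<in> borel_measurable borel" and "inj h"
    and x: "x \<in> {0..xbar}"
  shows "Vbar C \<beta> P (\<lambda>x q. cinv c (proj (c 0) (c x) (h q))) differentiable (at x within {0..xbar})"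
proof -
  interpret base_stock_model P "\<lambda>q. target_level c (h q)" C c \<beta> xbar
  proof (rule base_stock_model.intro)
    show "(\<lambda>q. target_level c (h q)) \<in> borel_measurable borel"
      using measurable_compose[OF h_measurable
          borel_measurable_mono[OF mono_target_level[OF c_strict_mono c_cont c_lim]]] .
    show "0 \<le> target_level c (h q)" for q
      by (rule target_level_nonneg[OF c_strict_mono c_cont c_lim])
    show "AE q in P. target_level c (h q) \<noteq> u" if "0 < u" for u
      using AE_neq_if_inj_atomless[OF prob_space.finite_measure[OF P_prob] P_borel P_noatom \<open>inj h\<close>, of "c u"]
      by eventually_elim (use target_level_eq_pos_imp[OF c_strict_mono c_cont c_lim that] in blast)
    show "(C has_real_derivative c x) (at x within {0..})" if "0 \<le> x" for x
      using C_deriv that by simp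
  qed fact+
  show ?thesis
    using cinv_proj_eq_min_target_level[OF c_strict_mono c_cont c_lim] x
    by (intro differentiable_Vbar) auto
qed

theorem lemma3:
  fixes \<beta> xbar :: real and C c :: "real \<Rightarrow> real" and P :: "real measure"
    and N :: nat and ps :: "nat \<Rightarrow> real"
  assumes beta: "0 < \<beta>" "\<beta> < 1"
    and xbar: "0 \<le> xbar"
    and C_nonneg: "\<forall>x\<ge>0. C x \<ge> 0"
    and C_incr: "mono_on {0..} C"
    and C_sconv: "strictly_convex_on {0..} C"
    and C_deriv: "\<forall>x\<ge>0. (C has_real_derivative c x) (at x within {0..})"
    and c_cont: "continuous_on {0..} c"
    and c_lim: "filterlim c at_top at_top"
    and P_prob: "prob_space P"
    and P_borel: "sets P = sets borel"
    and P_nonneg: "AE q in P. 0 \<le> q"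
    and P_mean: "integrable P (\<lambda>q. q)"
    and P_noatom: "\<forall>q. measure P {q} = 0"
    and N_pos: "1 \<le> N"
    and ps_nonneg: "\<forall>i\<in>{1..N}. 0 \<le> ps i"
  shows "(\<forall>x\<in>{0..xbar}. Vbar C \<beta> P (y_S c \<beta> N ps) differentiable (at x within {0..xbar}))
       \<and> (\<forall>x\<in>{0..xbar}. Vbar C \<beta> P (y_M c \<beta> N ps) differentiable (at x within {0..xbar}))"
proof -
  have c_strict_mono: "strict_mono_on {0..} c"
    using C_sconv C_deriv c_cont by (intro strict_mono_on_deriv_if_strictly_convex_on) auto
  note differentiable = differentiable_Vbar_cinv_proj[OF less_imp_le[OF beta(1)] beta(2) xbar C_deriv
      c_strict_mono c_cont c_lim P_prob P_borel P_mean P_noatom]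
  define hS where "hS q = \<beta> * ((1 / real N) * (\<Sum>i=1..N. max (ps i - q) 0)) - (1 - \<beta>) * q" for q
  define hM where "hM q = \<beta> * max (mu_N N ps - q) 0 - (1 - \<beta>) * q" for q
  have "y_S c \<beta> N ps = (\<lambda>x q. cinv c (proj (c 0) (c x) (hS q)))"
    and "y_M c \<beta> N ps = (\<lambda>x q. cinv c (proj (c 0) (c x) (hM q)))"
    by (simp_all add: fun_eq_iff y_S_def y_M_def hS_def hM_def)
  moreover have "hS \<in> borel_measurable borel" and "hM \<in> borel_measurable borel"
    unfolding hS_def hM_def by measurable
  moreover have "inj hS"
    unfolding hS_def using beta by (intro inj_weighted_antimono_minus_linear antimonoI mult_left_mono sum_mono) auto
  moreover have "inj hM"
    unfolding hM_def using beta by (intro inj_weighted_antimono_minus_linear antimonoI) auto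
  ultimately show ?thesis
    by (simp add: differentiable)
qed

end
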